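(* For every ribbon graph $\mathbb{G}$, the $\Delta$-matroid $D(\mathbb{G})=(E(\mathbb{G}),\mathcal{Q}(\mathbb{G}))$ is strong.
   Context: A ribbon graph $\mathbb{G}$ is a surface with boundary written as the union of vertex discs $V(\mathbb{G})$ and edge discs $E(\mathbb{G})$ meeting in disjoint line segments, each on the boundary of exactly one vertex and exactly one edge, with each edge containing exactly two such segments. For connected $\mathbb{G}$, a quasi-tree is $F\subseteq E(\mathbb{G})$ such that the spanning ribbon subgraph $(V(\mathbb{G}),F)$ has exactly one boundary component; in general, a union of quasi-trees of the components. $\mathcal{Q}(\mathbb{G})$ is the set of quasi-trees. A $\Delta$-matroid $(E,\mathcal{B})$ is strong if for all $B,B'\in\mathcal{B}$ and $x\in B\triangle B'$ there is $y\in B\triangle B'$ with both $B\triangle\{x,y\}\in\mathcal{B}$ and $B'\triangle\{x,y\}\in\mathcal{B}$. *)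

theory Defs
  imports Main
begin

text \<open>Each edge e has two ends (i :: bool); the end (e,i) is attached to the vertex
  disc rinc G e i along a line segment.  Each attaching segment has two endpoints
  ("corners") (e,i,j), j :: bool.  Going around the boundary circle of a vertex
  disc one alternately traverses attaching segments (joining (e,i,j) to (e,i,~j))
  and free vertex-boundary arcs; ralpha G pairs the two endpoints of each free
  vertex-boundary arc.  The two non-attached sides of the edge rectangle of e join
  (e,False,j) to (e,True,j) if e is untwisted and to (e,True,~j) if e is twisted.\<close>

type_synonym 'e corner = "'e \<times> bool \<times> bool"

record ('v, 'e) ribbon_graph =
  rverts :: "'v set"
  redges :: "'e set"
  rinc   :: "'e \<Rightarrow> bool \<Rightarrow> 'v"
  ralpha :: "'e corner \<Rightarrow> 'e corner"
  rtwist :: "'e \<Rightarrow> bool"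

definition corners_of :: "'e set \<Rightarrow> 'e corner set" where
  "corners_of A = {c. fst c \<in> A}"

definition cbeta :: "'e corner \<Rightarrow> 'e corner" where
  "cbeta c = (case c of (e, i, j) \<Rightarrow> (e, i, \<not> j))"

definition ceps :: "('v, 'e, 'z) ribbon_graph_scheme \<Rightarrow> 'e corner \<Rightarrow> 'e corner" where
  "ceps G c = (case c of (e, i, j) \<Rightarrow> (e, \<not> i, j \<noteq> rtwist G e))"

definition cvert :: "('v, 'e, 'z) ribbon_graph_scheme \<Rightarrow> 'e corner \<Rightarrow> 'v" where
  "cvert G c = (case c of (e, i, j) \<Rightarrow> rinc G e i)"

definition vertex_circle_rel :: "('v, 'e, 'z) ribbon_graph_scheme \<Rightarrow> ('e corner \<times> 'e corner) set" where
  "vertex_circle_rel G =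
     {(c, d). c \<in> corners_of (redges G) \<and> (d = ralpha G c \<or> d = cbeta c)}"

definition ribbon_graph :: "('v, 'e, 'z) ribbon_graph_scheme \<Rightarrow> bool" where
  "ribbon_graph G \<longleftrightarrow>
     finite (rverts G) \<and> finite (redges G) \<and>
     (\<forall>e \<in> redges G. \<forall>i. rinc G e i \<in> rverts G) \<and>
     (\<forall>c \<in> corners_of (redges G).
        ralpha G c \<in> corners_of (redges G) \<and> ralpha G (ralpha G c) = c \<and>
        ralpha G c \<noteq> c \<and> cvert G (ralpha G c) = cvert G c) \<and>
     (\<forall>c \<in> corners_of (redges G). \<forall>d \<in> corners_of (redges G).
        cvert G c = cvert G d \<longrightarrow> (c, d) \<in> (vertex_circle_rel G)\<^sup>*)"

definition adj_rel :: "('v, 'e, 'z) ribbon_graph_scheme \<Rightarrow> ('v \<times> 'v) set" where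
  "adj_rel G = {(rinc G e i, rinc G e (\<not> i)) | e i. e \<in> redges G}"

definition components :: "('v, 'e, 'z) ribbon_graph_scheme \<Rightarrow> 'v set set" where
  "components G = rverts G // (adj_rel G)\<^sup>*"

definition edges_at :: "('v, 'e, 'z) ribbon_graph_scheme \<Rightarrow> 'v set \<Rightarrow> 'e set" where
  "edges_at G C = {e \<in> redges G. rinc G e False \<in> C \<or> rinc G e True \<in> C}"

definition isolated_in :: "('v, 'e, 'z) ribbon_graph_scheme \<Rightarrow> 'v set \<Rightarrow> 'v set" where
  "isolated_in G C = {v \<in> C. \<forall>e \<in> redges G. \<forall>i. rinc G e i \<noteq> v}"

text \<open>One step along the boundary of the spanning ribbon subgraph with edge set F:
  free vertex arcs always; attaching segments of edges not in F; free sides of edges in F.\<close>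
definition bstep :: "('v, 'e, 'z) ribbon_graph_scheme \<Rightarrow> 'e set \<Rightarrow> ('e corner \<times> 'e corner) set" where
  "bstep G F = {(c, d). d = ralpha G c \<or> (fst c \<notin> F \<and> d = cbeta c) \<or> (fst c \<in> F \<and> d = ceps G c)}"

definition boundary_rel ::
  "('v, 'e, 'z) ribbon_graph_scheme \<Rightarrow> 'v set \<Rightarrow> 'e set \<Rightarrow> ('e corner \<times> 'e corner) set" where
  "boundary_rel G C F =
     {(c, d). c \<in> corners_of (edges_at G C) \<and> d \<in> corners_of (edges_at G C) \<and>
              ((c, d) \<in> bstep G F \<or> (d, c) \<in> bstep G F)}"

text \<open>Number of boundary components of the ribbon subgraph with vertex set C
  (a union of components) and edge set F \<inter> edges_at G C.\<close>
definition num_boundary_components ::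
  "('v, 'e, 'z) ribbon_graph_scheme \<Rightarrow> 'v set \<Rightarrow> 'e set \<Rightarrow> nat" where
  "num_boundary_components G C F =
     card (corners_of (edges_at G C) // (boundary_rel G C (F \<inter> edges_at G C))\<^sup>*)
     + card (isolated_in G C)"

text \<open>Quasi-trees: unions of quasi-trees of the connected components.\<close>
definition quasi_trees :: "('v, 'e, 'z) ribbon_graph_scheme \<Rightarrow> 'e set set" where
  "quasi_trees G = {F. F \<subseteq> redges G \<and>
     (\<forall>C \<in> components G. num_boundary_components G C F = 1)}"

definition symdiff :: "'a set \<Rightarrow> 'a set \<Rightarrow> 'a set" where
  "symdiff A B = (A - B) \<union> (B - A)"

definition delta_matroid :: "'a set \<Rightarrow> 'a set set \<Rightarrow> bool" where
  "delta_matroid E \<B> \<longleftrightarrow> finite E \<and> \<B> \<noteq> {} \<and> (\<forall>B \<in> \<B>. B \<subseteq> E) \<and>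
     (\<forall>B \<in> \<B>. \<forall>B' \<in> \<B>. \<forall>x \<in> symdiff B B'.
        \<exists>y \<in> symdiff B B'. symdiff B {x, y} \<in> \<B>)"

definition strong_delta_matroid :: "'a set \<Rightarrow> 'a set set \<Rightarrow> bool" where
  "strong_delta_matroid E \<B> \<longleftrightarrow> delta_matroid E \<B> \<and>
     (\<forall>B \<in> \<B>. \<forall>B' \<in> \<B>. \<forall>x \<in> symdiff B B'.
        \<exists>y \<in> symdiff B B'. symdiff B {x, y} \<in> \<B> \<and> symdiff B' {x, y} \<in> \<B>)"

end

theory Submission
  imports Defs
begin

text \<open>
  Following Bouchet, call a set of corners a cycle if it is closed under the free arcs of the
  vertex boundaries and meets every edge block in an even number of corners. Cycles form a
  binary vector space under symmetric difference, and on each edge a cycle picks one of the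
  three perfect matchings of the four corners of the block, or none: a label in the Klein
  four-group. Any two cycles meet in an even number of corners, so the labels of the cycles
  form a totally isotropic subspace for the symplectic form on labels.

  A spanning subgraph \<open>F\<close> uses the sides of the edges in \<open>F\<close> and the attaching segments of the
  other edges; the cycles whose labels follow this choice are exactly the unions of boundary
  components of \<open>F\<close>. Hence \<open>F\<close> is a quasi-tree of a component iff no nonzero cycle follows \<open>F\<close>,
  i.e. iff \<open>F\<close> gives an Eulerian vector of the isotropic system. Strong exchange between two
  such vectors then comes from parity arguments: pairing, via isotropy, the cycles witnessing
  that flipping an edge destroys the Eulerian property with each other or with the fundamental
  cycles of an Eulerian vector, and using that the number of edges carrying the third label
  is additive modulo 2 on cycles.
\<close>

lemma equiv_rtrancl: "sym R \<Longrightarrow> equiv UNIV (R\<^sup>*)"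
  by (simp add: equivI refl_rtrancl sym_rtrancl trans_rtrancl)

lemma quotient_rtrancl_eq_singleton:
  assumes "sym R" "a \<in> A" "R\<^sup>* `` {a} = A"
  shows "A // R\<^sup>* = {A}"
proof -
  have "R\<^sup>* `` {b} = A" if "b \<in> A" for b
    using that assms(3) equiv_class_eq[OF equiv_rtrancl[OF assms(1)], of a b] by blast
  then show ?thesis using assms(2) unfolding quotient_def by blast
qed

lemma card_involution_orbits:
  assumes "finite A" "\<And>x. x \<in> A \<Longrightarrow> f x \<in> A" "\<And>x. x \<in> A \<Longrightarrow> f (f x) = x"
    "\<And>x. x \<in> A \<Longrightarrow> f x \<noteq> x"
  shows "2 * card ((\<lambda>x. {x, f x}) ` A) = card A"
proof -
  let ?P = "(\<lambda>x. {x, f x}) ` A"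
  have "2 * card ?P = card (\<Union> ?P)"
  proof (rule card_partition)
    show "card p = 2" if "p \<in> ?P" for p
      using that assms(4) by (auto simp: card_insert_if) metis
    show "p \<inter> q = {}" if "p \<in> ?P" "q \<in> ?P" "p \<noteq> q" for p q
      using that assms(3) by auto metis+
  qed (use assms(1) in auto)
  moreover have "\<Union> ?P = A" using assms(2) by auto
  ultimately show ?thesis by simp
qed

lemma even_card_involution:
  assumes "finite A" "\<And>x. x \<in> A \<Longrightarrow> f x \<in> A" "\<And>x. x \<in> A \<Longrightarrow> f (f x) = x"
    "\<And>x. x \<in> A \<Longrightarrow> f x \<noteq> x"
  shows "even (card A)"
  by (metis card_involution_orbits[OF assms] dvd_triv_left)

lemma even_sum_cong:
  assumes "finite A" "\<And>x. x \<in> A \<Longrightarrow> even (f x :: nat) \<longleftrightarrow> even (g x)"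
  shows "even (sum f A) \<longleftrightarrow> even (sum g A)"
proof -
  have "{x\<in>A. odd (f x)} = {x\<in>A. odd (g x)}" using assms(2) by auto
  then show ?thesis using assms(1) by (simp add: even_sum_iff)
qed

lemma card_Collect_insert:
  assumes "finite A" "a \<notin> A"
  shows "card {x \<in> insert a A. P x} = of_bool (P a) + card {x \<in> A. P x}"
proof (cases "P a")
  case True
  then have "{x \<in> insert a A. P x} = insert a {x \<in> A. P x}" by auto
  then show ?thesis using assms True by simp
next
  case False
  then have "{x \<in> insert a A. P x} = {x \<in> A. P x}" by auto
  then show ?thesis using False by simp
qed

lemma even_card_has_other:
  assumes "even (card S)" "x \<in> S" "finite S"
  shows "\<exists>y\<in>S. y \<noteq> x"
proof (rule ccontr)
  assume "\<not> (\<exists>y\<in>S. y \<noteq> x)"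
  then have "S = {x}" using assms(2) by blast
  then show False using assms(1) by simp
qed

definition link_rel :: "'a set set \<Rightarrow> ('a \<times> 'a) set" where
  "link_rel Ls = {(a, b). \<exists>l\<in>Ls. a \<in> l \<and> b \<in> l}"

lemma sym_link_rel: "sym (link_rel Ls)"
  by (auto simp: link_rel_def sym_def)

lemma rtrancl_Un_link_cases:
  assumes "(x, y) \<in> (R \<union> {a, b} \<times> {a, b})\<^sup>*"
  shows "(x, y) \<in> R\<^sup>* \<or> ((x, a) \<in> R\<^sup>* \<or> (x, b) \<in> R\<^sup>*) \<and> ((a, y) \<in> R\<^sup>* \<or> (b, y) \<in> R\<^sup>*)"
  using assms
proof induction
  case (step y z)
  then show ?case by (blast intro: rtrancl_into_rtrancl)
qed simp

lemma card_quotient_le_Un_link: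
  assumes "finite W" and "sym R"
  shows "card (W // R\<^sup>*) \<le> card (W // (R \<union> {a, b} \<times> {a, b})\<^sup>*) + 1"
proof -
  let ?S = "(R \<union> {a, b} \<times> {a, b})\<^sup>*"
  let ?A = "R\<^sup>* `` {a}"
  have eqR: "equiv UNIV (R\<^sup>*)" using assms(2) by (rule equiv_rtrancl)
  have "R\<^sup>* \<subseteq> ?S" by (rule rtrancl_mono) blast
  then have class_S: "?S `` (R\<^sup>* `` {x}) = ?S `` {x}" for x
    by (blast intro: rtrancl_trans)
  have "inj_on (\<lambda>X. ?S `` X) (W // R\<^sup>* - {?A})"
  proof (rule inj_onI)
    fix X Y assume X: "X \<in> W // R\<^sup>* - {?A}" and Y: "Y \<in> W // R\<^sup>* - {?A}"
      and XY: "?S `` X = ?S `` Y"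
    obtain x y where x: "X = R\<^sup>* `` {x}" and y: "Y = R\<^sup>* `` {y}"
      using X Y by (auto elim!: quotientE)
    have "(x, y) \<in> ?S" using XY class_S by (auto simp: x y)
    moreover have "(x, a) \<notin> R\<^sup>*" "(a, y) \<notin> R\<^sup>*"
      using X Y equiv_class_eq[OF eqR, of x a] equiv_class_eq[OF eqR, of a y] by (auto simp: x y)
    ultimately have "(x, y) \<in> R\<^sup>*"
      by (blast dest: rtrancl_Un_link_cases intro: rtrancl_trans)
    then show "X = Y" using equiv_class_eq[OF eqR] by (simp add: x y)
  qed
  moreover have "(\<lambda>X. ?S `` X) ` (W // R\<^sup>* - {?A}) \<subseteq> W // ?S"
    using class_S by (auto elim!: quotientE intro: quotientI)
  moreover have "finite (W // ?S)" using assms(1) by (simp add: quotient_def)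
  ultimately have "card (W // R\<^sup>* - {?A}) \<le> card (W // ?S)"
    by (rule card_inj_on_le)
  then show ?thesis
    using assms(1) by (simp add: card_Diff_singleton_if quotient_def split: if_splits)
qed

lemma card_le_card_quotient_add_links:
  assumes "finite W" "finite Ls" "\<forall>l\<in>Ls. \<exists>a\<in>W. \<exists>b\<in>W. l = {a, b}"
  shows "card W \<le> card (W // (link_rel Ls)\<^sup>*) + card Ls"
  using assms(2,3)
proof (induction Ls rule: finite_induct)
  case empty
  have "W // (link_rel {})\<^sup>* = (\<lambda>x. {x}) ` W" by (auto simp: link_rel_def quotient_def)
  then show ?case by (simp add: card_image)
next
  case (insert l Ls)
  obtain a b where "l = {a, b}" using insert.prems by auto
  then have "link_rel (insert l Ls) = link_rel Ls \<union> {a, b} \<times> {a, b}"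
    by (auto simp: link_rel_def)
  then show ?case
    using insert card_quotient_le_Un_link[OF assms(1) sym_link_rel, of Ls a b] by simp
qed

lemma symdiff_commute: "symdiff A B = symdiff B A"
  by (auto simp: symdiff_def)

section \<open>Labels of corner sets\<close>

text \<open>The four corners of an edge block admit three perfect matchings, named by the nonzero elements
  of the Klein four-group \<open>bool \<times> bool\<close>: \<open>(False, True)\<close> pairs the two ends of each attaching
  segment, \<open>(True, t)\<close> pairs the ends of the two sides of the edge rectangle when the edge has
  twist \<open>t\<close>. A corner set meeting the block evenly is empty, full, or one of the two pairs of a
  matching there, and \<open>block_label\<close> names that matching (\<open>label0\<close> for empty and full).\<close>

definition block_label :: "'e corner set \<Rightarrow> 'e \<Rightarrow> bool \<times> bool" where
  "block_label Z e =
     (((e, False, False) \<in> Z) \<noteq> ((e, False, True) \<in> Z),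
      ((e, False, False) \<in> Z) \<noteq> ((e, True, False) \<in> Z))"

definition block_even :: "'e corner set \<Rightarrow> 'e \<Rightarrow> bool" where
  "block_even Z e \<longleftrightarrow>
     (((e, False, False) \<in> Z) \<noteq> ((e, False, True) \<in> Z)) =
     (((e, True, False) \<in> Z) \<noteq> ((e, True, True) \<in> Z))"

abbreviation label0 :: "bool \<times> bool" where
  "label0 \<equiv> (False, False)"

definition label_add :: "bool \<times> bool \<Rightarrow> bool \<times> bool \<Rightarrow> bool \<times> bool" where
  "label_add a b = (fst a \<noteq> fst b, snd a \<noteq> snd b)"

definition label_form :: "bool \<times> bool \<Rightarrow> bool \<times> bool \<Rightarrow> bool" where
  "label_form a b \<longleftrightarrow> (fst a \<and> snd b) \<noteq> (snd a \<and> fst b)"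

definition matched :: "('e \<Rightarrow> bool \<times> bool) \<Rightarrow> 'e corner \<Rightarrow> 'e corner" where
  "matched L c = (case c of (e, i, j) \<Rightarrow>
     if fst (L e) then (e, \<not> i, j \<noteq> snd (L e)) else (e, i, \<not> j))"

lemma matched_simps [simp]:
  "fst (matched L c) = fst c"
  "matched L (matched L c) = c"
  "matched L c \<noteq> c"
  by (cases c; auto simp: matched_def)+

lemma mem_corners_of [simp]: "c \<in> corners_of A \<longleftrightarrow> fst c \<in> A"
  by (simp add: corners_of_def)

lemma corners_of_singleton:
  "corners_of {e} = {(e, False, False), (e, False, True), (e, True, False), (e, True, True)}"
  by (auto simp: corners_of_def)

lemma matched_closed_iff:
  assumes "L e \<noteq> label0"
  shows "(\<forall>i j. (e, i, j) \<in> Z \<longrightarrow> matched L (e, i, j) \<in> Z) \<longleftrightarrow>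
    block_even Z e \<and> block_label Z e \<in> {label0, L e}"
proof -
  obtain p t where "L e = (p, t)" by fastforce
  with assms show ?thesis
    unfolding all_bool_eq matched_def block_even_def block_label_def
    by (cases p; cases t; simp; blast)
qed

lemma card_Int_corners_of_singleton:
  "card (Z \<inter> corners_of {e}) =
     of_bool ((e, False, False) \<in> Z) + of_bool ((e, False, True) \<in> Z) +
     of_bool ((e, True, False) \<in> Z) + of_bool ((e, True, True) \<in> Z)"
  by (simp add: corners_of_singleton Int_insert_right card_insert_if)

lemma even_card_block_iff: "even (card (Z \<inter> corners_of {e})) \<longleftrightarrow> block_even Z e"
  by (auto simp: card_Int_corners_of_singleton block_even_def)

lemma even_card_block_Int_iff:
  assumes "block_even Z e" "block_even W e"
  shows "even (card (Z \<inter> W \<inter> corners_of {e})) \<longleftrightarrow>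
    \<not> label_form (block_label Z e) (block_label W e)"
  using assms
  by (auto simp: card_Int_corners_of_singleton block_even_def block_label_def label_form_def)

lemma block_label_symdiff:
  "block_label (symdiff Z W) e = label_add (block_label Z e) (block_label W e)"
  by (auto simp: block_label_def label_add_def symdiff_def)

lemma block_even_symdiff: "block_even Z e \<Longrightarrow> block_even W e \<Longrightarrow> block_even (symdiff Z W) e"
  by (auto simp: block_even_def symdiff_def)

lemma label_add_eq_label0_iff [simp]: "label_add a b = label0 \<longleftrightarrow> a = b"
  by (cases a; cases b) (auto simp: label_add_def)

lemma label_add_label0 [simp]: "label_add a label0 = a" "label_add label0 a = a"
  by (auto simp: label_add_def)

lemma label_add_line: "a \<in> {label0, l} \<Longrightarrow> b \<in> {label0, l} \<Longrightarrow> label_add a b \<in> {label0, l}"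
  by (cases l) (auto simp: label_add_def)

lemma label_add_commute: "label_add a b = label_add b a"
  by (auto simp: label_add_def)

lemma label_add_coset:
  assumes "a \<in> {label0, p}" "b \<in> {q, label_add p q}"
  shows "label_add a b \<in> {q, label_add p q}"
  using assms by (cases p; cases q) (auto simp: label_add_def)

lemma label_form_lines:
  assumes "a \<in> {label0, p}" "b \<in> {label0, q}" "p \<noteq> label0" "q \<noteq> label0"
  shows "label_form a b \<longleftrightarrow> p \<noteq> q \<and> a \<noteq> label0 \<and> b \<noteq> label0"
  using assms by (cases p; cases q) (auto simp: label_form_def)

text \<open>Testing a label for equality with a fixed nonzero label is a quadratic form whose
  polarisation is the symplectic form \<open>label_form\<close>.\<close>

lemma label_eq_add_parity:
  assumes "g \<noteq> label0"
  shows "even (of_bool (label_add a b = g) :: nat) \<longleftrightarrow>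
    even (of_bool (a = g) + of_bool (b = g) + of_bool (label_form a b) :: nat)"
  using assms by (cases a; cases b; cases g) (auto simp: label_add_def label_form_def)

section \<open>Cycles of a corner system\<close>

text \<open>The corners of a connected piece of a ribbon graph, with the involution \<open>alpha\<close> pairing the
  two ends of each free arc of the vertex boundaries; \<open>connected\<close> says that the vertex
  boundaries and the edges link all corners together.\<close>

locale corner_system =
  fixes E :: "'e set" and alpha :: "'e corner \<Rightarrow> 'e corner" and twist :: "'e \<Rightarrow> bool"
  assumes finite_E: "finite E" and E_nonempty: "E \<noteq> {}"
    and alpha_closed: "c \<in> corners_of E \<Longrightarrow> alpha c \<in> corners_of E"
    and alpha_alpha: "c \<in> corners_of E \<Longrightarrow> alpha (alpha c) = c"
    and alpha_neq: "c \<in> corners_of E \<Longrightarrow> alpha c \<noteq> c"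
    and connected: "X \<subseteq> corners_of E \<Longrightarrow> X \<noteq> {} \<Longrightarrow> (\<forall>c\<in>X. alpha c \<in> X) \<Longrightarrow>
      (\<forall>c\<in>X. corners_of {fst c} \<subseteq> X) \<Longrightarrow> X = corners_of E"
begin

abbreviation K :: "'e corner set" where
  "K \<equiv> corners_of E"

text \<open>In Bouchet's language the labels of the cycles form an isotropic system on \<open>E\<close>,
  \<open>eulerian L\<close> says that \<open>L\<close> is an Eulerian vector of it, and \<open>fundamental L v Z\<close> that
  \<open>Z\<close> is the \<open>v\<close>-fundamental cycle of \<open>L\<close>.\<close>

definition cycle :: "'e corner set \<Rightarrow> bool" where
  "cycle Z \<longleftrightarrow> Z \<subseteq> K \<and> (\<forall>c\<in>Z. alpha c \<in> Z) \<and> (\<forall>e\<in>E. block_even Z e)"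

definition along :: "('e \<Rightarrow> bool \<times> bool) \<Rightarrow> 'e corner set \<Rightarrow> bool" where
  "along L Z \<longleftrightarrow> cycle Z \<and> (\<forall>e\<in>E. block_label Z e \<in> {label0, L e})"

definition eulerian :: "('e \<Rightarrow> bool \<times> bool) \<Rightarrow> bool" where
  "eulerian L \<longleftrightarrow> (\<forall>Z. along L Z \<longrightarrow> (\<forall>e\<in>E. block_label Z e = label0))"

definition fundamental :: "('e \<Rightarrow> bool \<times> bool) \<Rightarrow> 'e \<Rightarrow> 'e corner set \<Rightarrow> bool" where
  "fundamental L v Z \<longleftrightarrow> along (L(v := block_label Z v)) Z \<and> block_label Z v \<notin> {label0, L v}"

definition subgraph_label :: "'e set \<Rightarrow> 'e \<Rightarrow> bool \<times> bool" where
  "subgraph_label F e = (if e \<in> F then (True, twist e) else (False, True))"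

definition third_label :: "'e \<Rightarrow> bool \<times> bool" where
  "third_label e = (True, \<not> twist e)"

definition boundary_adj :: "'e set \<Rightarrow> ('e corner \<times> 'e corner) set" where
  "boundary_adj F = {(c, d). c \<in> K \<and> d \<in> K \<and>
     (d = alpha c \<or> c = alpha d \<or> d = matched (subgraph_label F) c)}"

definition label_count :: "('e \<Rightarrow> bool \<times> bool) \<Rightarrow> 'e corner set \<Rightarrow> nat" where
  "label_count C Z = card {e\<in>E. block_label Z e = C e}"

lemma finite_K: "finite K"
  using finite_E by (simp add: corners_of_def finite_subset[of _ "E \<times> UNIV"] subset_iff)

lemma card_eq_sum_blocks: "Z \<subseteq> K \<Longrightarrow> card Z = (\<Sum>e\<in>E. card (Z \<inter> corners_of {e}))"
  by (subst card_UN_disjoint[symmetric])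
    (auto simp: finite_E finite_subset[OF _ finite_K] corners_of_def intro!: arg_cong[where f = card])

lemma even_card_alpha_closed: "Z \<subseteq> K \<Longrightarrow> \<forall>c\<in>Z. alpha c \<in> Z \<Longrightarrow> even (card Z)"
  by (rule even_card_involution[where f = alpha])
    (use finite_K alpha_alpha alpha_neq in \<open>auto intro: finite_subset\<close>)

text \<open>\<open>Z\<close> itself has even size because \<open>alpha\<close> has no fixed points.\<close>

lemma block_even_remaining:
  assumes "Z \<subseteq> K" "\<forall>c\<in>Z. alpha c \<in> Z" "v \<in> E" "\<forall>e\<in>E - {v}. block_even Z e"
  shows "block_even Z v"
proof -
  have "card Z = card (Z \<inter> corners_of {v}) + (\<Sum>e\<in>E - {v}. card (Z \<inter> corners_of {e}))"
    using card_eq_sum_blocks[OF assms(1)] finite_E assms(3) by (simp add: sum.remove)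
  moreover have "even (\<Sum>e\<in>E - {v}. card (Z \<inter> corners_of {e}))"
    using assms(4) by (auto intro!: dvd_sum simp: even_card_block_iff)
  ultimately show ?thesis
    using even_card_alpha_closed[OF assms(1,2)] by (simp add: even_card_block_iff[symmetric])
qed

lemma cycle_empty: "cycle {}"
  by (simp add: cycle_def block_even_def)

lemma cycle_symdiff:
  assumes "cycle Z" "cycle W"
  shows "cycle (symdiff Z W)"
proof -
  have "alpha c \<in> symdiff Z W" if "c \<in> symdiff Z W" for c
  proof -
    have "c \<in> K" using that assms by (auto simp: cycle_def symdiff_def)
    then show ?thesis
      using that assms alpha_alpha[of c] unfolding cycle_def symdiff_def by (metis Diff_iff Un_iff)
  qed
  then show ?thesis
    using assms by (auto simp: cycle_def block_even_symdiff) (auto simp: symdiff_def)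
qed

lemma alongI: "cycle Z \<Longrightarrow> (\<And>e. e \<in> E \<Longrightarrow> block_label Z e \<in> {label0, L e}) \<Longrightarrow> along L Z"
  by (simp add: along_def)

lemma along_label: "along L Z \<Longrightarrow> e \<in> E \<Longrightarrow> block_label Z e \<in> {label0, L e}"
  by (simp add: along_def)

lemma along_cycle: "along L Z \<Longrightarrow> cycle Z"
  by (simp add: along_def)

lemma along_symdiff:
  assumes "along L Z" "along L W"
  shows "along L (symdiff Z W)"
proof (rule alongI)
  show "cycle (symdiff Z W)" using assms by (simp add: along_def cycle_symdiff)
  show "block_label (symdiff Z W) e \<in> {label0, L e}" if "e \<in> E" for e
    unfolding block_label_symdiff using assms that by (intro label_add_line along_label)
qed

lemma along_agree:
  assumes "along L Z" "\<And>e. e \<in> E \<Longrightarrow> block_label Z e \<noteq> label0 \<Longrightarrow> L' e = L e"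
  shows "along L' Z"
proof (rule alongI)
  show "cycle Z" using assms(1) by (rule along_cycle)
  show "block_label Z e \<in> {label0, L' e}" if "e \<in> E" for e
    using along_label[OF assms(1) that] assms(2)[OF that]
    by (cases "block_label Z e = label0") auto
qed

lemma eulerianD: "eulerian L \<Longrightarrow> along L Z \<Longrightarrow> e \<in> E \<Longrightarrow> block_label Z e = label0"
  by (simp add: eulerian_def)

lemma cycles_isotropic:
  assumes "cycle Z" "cycle W"
  shows "even (card {e\<in>E. label_form (block_label Z e) (block_label W e)})"
proof -
  have ZW: "Z \<inter> W \<subseteq> K" "\<forall>c\<in>Z \<inter> W. alpha c \<in> Z \<inter> W"
    using assms by (auto simp: cycle_def)
  have "even (\<Sum>e\<in>E. card (Z \<inter> W \<inter> corners_of {e}))"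
    using even_card_alpha_closed[OF ZW] card_eq_sum_blocks[OF ZW(1)] by simp
  then have "even (card {e\<in>E. odd (card (Z \<inter> W \<inter> corners_of {e}))})"
    by (simp add: even_sum_iff finite_E)
  moreover have "{e\<in>E. odd (card (Z \<inter> W \<inter> corners_of {e}))} =
      {e\<in>E. label_form (block_label Z e) (block_label W e)}"
    using assms by (auto simp: cycle_def even_card_block_Int_iff)
  ultimately show ?thesis by simp
qed

lemma along_isotropic:
  assumes "along P Z" "along Q W" "\<forall>e\<in>E. P e \<noteq> label0 \<and> Q e \<noteq> label0"
  shows "even (card {e\<in>E. P e \<noteq> Q e \<and> block_label Z e \<noteq> label0 \<and> block_label W e \<noteq> label0})"
proof -
  have "label_form (block_label Z e) (block_label W e) \<longleftrightarrow>
      P e \<noteq> Q e \<and> block_label Z e \<noteq> label0 \<and> block_label W e \<noteq> label0" if "e \<in> E" for e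
    using along_label[OF assms(1) that] along_label[OF assms(2) that] assms(3) that
    by (intro label_form_lines) auto
  then have "{e\<in>E. label_form (block_label Z e) (block_label W e)} =
      {e\<in>E. P e \<noteq> Q e \<and> block_label Z e \<noteq> label0 \<and> block_label W e \<noteq> label0}"
    by auto
  then show ?thesis
    using cycles_isotropic[OF along_cycle[OF assms(1)] along_cycle[OF assms(2)]] by simp
qed

lemma along_isotropic_single:
  assumes "along P Z" "along Q W" "\<forall>e\<in>E. P e \<noteq> label0 \<and> Q e \<noteq> label0"
    "x \<in> E" "\<forall>e\<in>E - {x}. P e = Q e"
  shows "\<not> (P x \<noteq> Q x \<and> block_label Z x \<noteq> label0 \<and> block_label W x \<noteq> label0)"
proof
  assume x: "P x \<noteq> Q x \<and> block_label Z x \<noteq> label0 \<and> block_label W x \<noteq> label0"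
  with assms(4,5) have "{e\<in>E. P e \<noteq> Q e \<and> block_label Z e \<noteq> label0 \<and> block_label W e \<noteq> label0} = {x}"
    by auto
  then show False using along_isotropic[OF assms(1-3)] by simp
qed

lemma along_isotropic_pair:
  assumes "along P Z" "along Q W" "\<forall>e\<in>E. P e \<noteq> label0 \<and> Q e \<noteq> label0"
    "x \<in> E" "y \<in> E" "x \<noteq> y" "\<forall>e\<in>E - {x, y}. P e = Q e"
  shows "(P x \<noteq> Q x \<and> block_label Z x \<noteq> label0 \<and> block_label W x \<noteq> label0) \<longleftrightarrow>
    (P y \<noteq> Q y \<and> block_label Z y \<noteq> label0 \<and> block_label W y \<noteq> label0)"
proof -
  let ?px = "P x \<noteq> Q x \<and> block_label Z x \<noteq> label0 \<and> block_label W x \<noteq> label0"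
  let ?py = "P y \<noteq> Q y \<and> block_label Z y \<noteq> label0 \<and> block_label W y \<noteq> label0"
  have "{e\<in>E. P e \<noteq> Q e \<and> block_label Z e \<noteq> label0 \<and> block_label W e \<noteq> label0} =
      (if ?px then {x} else {}) \<union> (if ?py then {y} else {})"
    using assms(4,5,7) by auto
  then show ?thesis
    using along_isotropic[OF assms(1-3)] assms(6) by (auto split: if_splits)
qed

lemma label_count_symdiff:
  assumes "cycle Z" "cycle W" "\<forall>e\<in>E. C e \<noteq> label0"
  shows "even (label_count C (symdiff Z W)) \<longleftrightarrow>
    (even (label_count C Z) \<longleftrightarrow> even (label_count C W))"
proof -
  let ?f = "\<lambda>e. label_form (block_label Z e) (block_label W e)"
  have "even (label_count C (symdiff Z W)) \<longleftrightarrow>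
      even (\<Sum>e\<in>E. of_bool (label_add (block_label Z e) (block_label W e) = C e) :: nat)"
    by (simp add: label_count_def block_label_symdiff finite_E Int_def)
  also have "\<dots> \<longleftrightarrow> even (\<Sum>e\<in>E. of_bool (block_label Z e = C e) + of_bool (block_label W e = C e)
      + of_bool (?f e) :: nat)"
    by (intro even_sum_cong finite_E label_eq_add_parity) (use assms(3) in auto)
  also have "\<dots> \<longleftrightarrow> even (label_count C Z + label_count C W + card {e\<in>E. ?f e})"
    by (simp add: sum.distrib label_count_def finite_E Int_def)
  finally show ?thesis
    using cycles_isotropic[OF assms(1,2)] by simp
qed

lemma not_eulerian_witness:
  assumes "eulerian L" "\<not> eulerian L'" "\<forall>e\<in>E - {x}. L' e = L e"
  shows "\<exists>Z. along L' Z \<and> x \<in> E \<and> block_label Z x \<noteq> label0"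
proof -
  obtain Z e where Z: "along L' Z" "e \<in> E" "block_label Z e \<noteq> label0"
    using assms(2) by (auto simp: eulerian_def)
  have "\<not> along L Z" using assms(1) Z by (auto simp: eulerian_def)
  then have "x \<in> E \<and> block_label Z x \<noteq> label0"
    using Z(1) assms(3) by (auto simp: along_def) (metis Diff_iff singletonD)+
  then show ?thesis using Z(1) by blast
qed

lemma block_subset_if_label0:
  assumes "block_label Z e = label0" "block_even Z e" "c \<in> Z" "fst c = e"
  shows "corners_of {e} \<subseteq> Z"
  using assms
  by (cases c; cases "fst (snd c)"; cases "snd (snd c)")
    (auto simp: corners_of_singleton block_label_def block_even_def)

lemma trivial_cycle_iff:
  assumes "cycle Z"
  shows "(\<forall>e\<in>E. block_label Z e = label0) \<longleftrightarrow> Z = {} \<or> Z = K"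
proof
  assume trivial: "\<forall>e\<in>E. block_label Z e = label0"
  have "corners_of {fst c} \<subseteq> Z" if "c \<in> Z" for c
  proof -
    have "fst c \<in> E" using that assms by (auto simp: cycle_def)
    then show ?thesis
      using block_subset_if_label0[of Z "fst c" c] trivial assms that by (auto simp: cycle_def)
  qed
  then show "Z = {} \<or> Z = K"
    using assms connected[of Z] unfolding cycle_def by blast
qed (auto simp: block_label_def)

lemma along_matched_closed:
  assumes "along L Z" "\<forall>e\<in>E. L e \<noteq> label0" "c \<in> Z"
  shows "matched L c \<in> Z"
proof -
  obtain e i j where c: "c = (e, i, j)" by (cases c)
  have "e \<in> E" using assms c by (auto simp: along_def cycle_def)
  then have "\<forall>i j. (e, i, j) \<in> Z \<longrightarrow> matched L (e, i, j) \<in> Z"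
    using assms matched_closed_iff[of L e Z] by (auto simp: along_def cycle_def)
  then show ?thesis using assms(3) c by blast
qed

lemma subgraph_label_nonzero [simp]: "subgraph_label F e \<noteq> label0"
  by (simp add: subgraph_label_def)

lemma third_label_nonzero [simp]: "third_label e \<noteq> label0" "label0 \<noteq> third_label e"
  by (simp_all add: third_label_def)

lemma subgraph_label_neq_third [simp]:
  "subgraph_label F e \<noteq> third_label e" "third_label e \<noteq> subgraph_label F e"
  by (auto simp: subgraph_label_def third_label_def)

lemma subgraph_labels_nonzero: "\<forall>e\<in>E. subgraph_label F e \<noteq> label0 \<and> subgraph_label F' e \<noteq> label0"
  by simp

lemma subgraph_label_add:
  "e \<in> symdiff F F' \<Longrightarrow> label_add (subgraph_label F' e) (subgraph_label F e) = third_label e"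
  by (auto simp: subgraph_label_def third_label_def label_add_def symdiff_def)

lemma subgraph_label_add_third:
  "e \<in> symdiff F F' \<Longrightarrow> label_add (subgraph_label F e) (third_label e) = subgraph_label F' e"
  by (auto simp: subgraph_label_def third_label_def label_add_def symdiff_def)

lemma subgraph_label_other:
  "e \<in> symdiff F F' \<Longrightarrow> a \<notin> {label0, subgraph_label F e} \<Longrightarrow> a = subgraph_label F' e \<or> a = third_label e"
  by (cases a) (auto simp: subgraph_label_def third_label_def symdiff_def)

lemma boundary_class_along:
  assumes "c \<in> K"
  shows "along (subgraph_label F) ((boundary_adj F)\<^sup>* `` {c})"
proof -
  let ?X = "(boundary_adj F)\<^sup>* `` {c}"
  have step: "d \<in> ?X" if "b \<in> ?X" "(b, d) \<in> boundary_adj F" for b d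
    using that by (auto intro: rtrancl_into_rtrancl)
  have "?X \<subseteq> K"
  proof
    fix d assume "d \<in> ?X"
    then have "(c, d) \<in> (boundary_adj F)\<^sup>*" by simp
    then show "d \<in> K" using assms by induction (auto simp: boundary_adj_def)
  qed
  moreover have "(d, alpha d) \<in> boundary_adj F" "(d, matched (subgraph_label F) d) \<in> boundary_adj F"
    if "d \<in> K" for d
    using that alpha_closed[OF that] by (auto simp: boundary_adj_def)
  ultimately have alpha: "alpha d \<in> ?X" and matched: "matched (subgraph_label F) d \<in> ?X"
    if "d \<in> ?X" for d
    using that step by blast+
  have "block_even ?X e \<and> block_label ?X e \<in> {label0, subgraph_label F e}" for e
    using matched matched_closed_iff[of "subgraph_label F" e ?X] by simp
  then show ?thesis
    using \<open>?X \<subseteq> K\<close> alpha by (auto simp: along_def cycle_def)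
qed

lemma along_boundary_closed:
  assumes "along (subgraph_label F) Z"
  shows "(boundary_adj F)\<^sup>* `` Z \<subseteq> Z"
proof -
  have "d \<in> Z" if "c \<in> Z" "(c, d) \<in> boundary_adj F" for c d
  proof -
    have "d \<in> K" using that by (simp add: boundary_adj_def)
    moreover have "matched (subgraph_label F) c \<in> Z"
      using along_matched_closed[OF assms _ that(1)] by simp
    ultimately show ?thesis
      using that assms alpha_alpha[of d] by (auto simp: boundary_adj_def along_def cycle_def)
  qed
  then have "boundary_adj F `` Z \<subseteq> Z" by blast
  then show ?thesis by (simp add: Image_closed_trancl)
qed

lemma eulerian_iff_boundary_connected:
  "eulerian (subgraph_label F) \<longleftrightarrow> card (K // (boundary_adj F)\<^sup>*) = 1"
proof
  let ?R = "(boundary_adj F)\<^sup>*"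
  assume eulerian: "eulerian (subgraph_label F)"
  obtain c where c: "c \<in> K" using E_nonempty by auto
  have X: "along (subgraph_label F) (?R `` {c})" by (rule boundary_class_along[OF c])
  then have "?R `` {c} = {} \<or> ?R `` {c} = K"
    using trivial_cycle_iff[OF along_cycle[OF X]] eulerianD[OF eulerian X] by blast
  then have "?R `` {c} = K" by auto
  moreover have "sym (boundary_adj F)" by (auto simp: boundary_adj_def sym_def)
  ultimately have "K // ?R = {K}"
    using c by (intro quotient_rtrancl_eq_singleton)
  then show "card (K // ?R) = 1" by simp
next
  let ?R = "(boundary_adj F)\<^sup>*"
  assume one: "card (K // ?R) = 1"
  show "eulerian (subgraph_label F)"
  proof (unfold eulerian_def, intro allI impI ballI)
    fix Z e assume Z: "along (subgraph_label F) Z" and "e \<in> E"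
    have "K \<subseteq> Z" if "c \<in> Z" for c
    proof
      fix d assume "d \<in> K"
      have "c \<in> K" using that Z by (auto simp: along_def cycle_def)
      then have "?R `` {d} = ?R `` {c}"
        using \<open>d \<in> K\<close> one by (metis card_1_singletonE quotientI singletonD)
      then show "d \<in> Z"
        using along_boundary_closed[OF Z] that by blast
    qed
    then have "Z = {} \<or> Z = K" using Z by (auto simp: along_def cycle_def)
    then show "block_label Z e = label0"
      using trivial_cycle_iff along_cycle[OF Z] \<open>e \<in> E\<close> by blast
  qed
qed

lemma finite_along: "finite {Z. along L Z}"
  by (rule finite_subset[of _ "Pow K"]) (auto simp: along_def cycle_def finite_K)

text \<open>By isotropy with \<open>Z\<close>, every cycle along the flipped labels vanishes on \<open>v\<close>.\<close>

lemma along_flip_psubset: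
  assumes Z: "along (subgraph_label F) Z" "v \<in> E" "block_label Z v \<noteq> label0"
  shows "{W. along (subgraph_label (symdiff F {v})) W} \<subset> {W. along (subgraph_label F) W}"
proof
  let ?F' = "subgraph_label (symdiff F {v})"
  have flip_other: "\<forall>e\<in>E - {v}. subgraph_label F e = ?F' e"
    and flip_v: "?F' v \<noteq> subgraph_label F v"
    by (auto simp: subgraph_label_def symdiff_def)
  show "{W. along ?F' W} \<subseteq> {W. along (subgraph_label F) W}"
  proof clarify
    fix W assume W: "along ?F' W"
    have "block_label W v = label0"
      using along_isotropic_single[OF Z(1) W subgraph_labels_nonzero Z(2) flip_other] flip_v Z(3)
      by auto
    then show "along (subgraph_label F) W"
      by (intro along_agree[OF W]) (auto simp: subgraph_label_def symdiff_def)
  qed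
  have "block_label Z v \<notin> {label0, ?F' v}"
    using along_label[OF Z(1,2)] Z(3) flip_v by auto
  then have "\<not> along ?F' Z"
    using Z(2) along_label by blast
  then show "{W. along ?F' W} \<noteq> {W. along (subgraph_label F) W}"
    using Z(1) by blast
qed

lemma eulerian_subgraph_label_exists: "\<exists>F\<subseteq>E. eulerian (subgraph_label F)"
proof -
  let ?n = "\<lambda>F. card {Z. along (subgraph_label F) Z}"
  obtain F where F: "F \<subseteq> E" and min: "\<And>F'. F' \<subseteq> E \<Longrightarrow> ?n F \<le> ?n F'"
    using ex_has_least_nat[of "\<lambda>F. F \<subseteq> E" "{}" ?n] by auto
  have "eulerian (subgraph_label F)"
  proof (rule ccontr)
    assume "\<not> eulerian (subgraph_label F)"
    then obtain Z v where Z: "along (subgraph_label F) Z" "v \<in> E" "block_label Z v \<noteq> label0"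
      by (auto simp: eulerian_def)
    have "?n (symdiff F {v}) < ?n F"
      by (rule psubset_card_mono[OF finite_along along_flip_psubset[OF Z]])
    moreover have "symdiff F {v} \<subseteq> E" using F Z(2) by (auto simp: symdiff_def)
    ultimately show False using min[of "symdiff F {v}"] by simp
  qed
  with F show ?thesis by blast
qed

subsection \<open>Fundamental cycles\<close>

lemma fundamental_along: "fundamental L v Z \<Longrightarrow> along (L(v := block_label Z v)) Z"
  by (simp add: fundamental_def)

lemma fundamental_label: "fundamental L v Z \<Longrightarrow> block_label Z v \<notin> {label0, L v}"
  by (simp add: fundamental_def)

definition links_except :: "('e \<Rightarrow> bool \<times> bool) \<Rightarrow> 'e \<Rightarrow> 'e corner set set" where
  "links_except L v = (\<lambda>c. {c, alpha c}) ` K \<union> (\<lambda>c. {c, matched L c}) ` (K - corners_of {v})"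

lemma card_classes_links_except:
  assumes "v \<in> E"
  shows "2 \<le> card (K // (link_rel (links_except L v))\<^sup>*)"
proof -
  let ?A = "(\<lambda>c. {c, alpha c}) ` K" and ?M = "(\<lambda>c. {c, matched L c}) ` (K - corners_of {v})"
  have block: "corners_of {v} \<subseteq> K" "card (corners_of {v}) = 4"
    using assms by (auto simp: corners_of_singleton)
  have "2 * card ?A = card K"
    by (rule card_involution_orbits) (use finite_K alpha_closed alpha_alpha alpha_neq in auto)
  moreover have "2 * card ?M = card (K - corners_of {v})"
    by (rule card_involution_orbits) (use finite_K in auto)
  moreover have "card (K - corners_of {v}) = card K - 4"
    using block by (simp add: card_Diff_subset finite_subset[OF _ finite_K])
  moreover have "4 \<le> card K"
    using block card_mono[OF finite_K block(1)] by simp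
  moreover have "card K \<le> card (K // (link_rel (links_except L v))\<^sup>*) + card (links_except L v)"
    by (rule card_le_card_quotient_add_links)
      (use finite_K alpha_closed in \<open>auto simp: links_except_def\<close>)
  moreover have "card (links_except L v) \<le> card ?A + card ?M"
    unfolding links_except_def by (rule card_Un_le)
  ultimately show ?thesis by linarith
qed

lemma links_except_class_cycle:
  assumes "\<forall>e\<in>E. L e \<noteq> label0" "v \<in> E"
  defines "X \<equiv> (link_rel (links_except L v))\<^sup>* `` {(v, False, False)}"
  shows "cycle X" "\<forall>u\<in>E - {v}. block_label X u \<in> {label0, L u}"
proof -
  have link: "d \<in> X" if "c \<in> X" "{c, d} \<in> links_except L v" for c d
  proof -
    have "(c, d) \<in> link_rel (links_except L v)" using that(2) by (auto simp: link_rel_def)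
    then show ?thesis using that(1) by (auto simp: X_def intro: rtrancl_into_rtrancl)
  qed
  have XK: "X \<subseteq> K"
  proof
    fix d assume "d \<in> X"
    then have "((v, False, False), d) \<in> (link_rel (links_except L v))\<^sup>*" by (simp add: X_def)
    moreover have "d \<in> K" if "(c, d) \<in> link_rel (links_except L v)" for c d
      using that alpha_closed by (auto simp: link_rel_def links_except_def)
    ultimately show "d \<in> K" using assms(2) by (cases rule: rtranclE) auto
  qed
  have alpha: "\<forall>c\<in>X. alpha c \<in> X"
  proof
    fix c assume "c \<in> X"
    then have "{c, alpha c} \<in> links_except L v" using XK by (auto simp: links_except_def)
    then show "alpha c \<in> X" using link \<open>c \<in> X\<close> by blast
  qed
  have "matched L c \<in> X" if "c \<in> X" "fst c \<noteq> v" for c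
  proof -
    have "c \<in> K - corners_of {v}" using that XK by auto
    then have "{c, matched L c} \<in> links_except L v" by (auto simp: links_except_def)
    then show ?thesis using link that(1) by blast
  qed
  then have off_v: "block_even X u \<and> block_label X u \<in> {label0, L u}" if "u \<in> E - {v}" for u
    using matched_closed_iff[of L u X] assms(1) that by simp
  then show "\<forall>u\<in>E - {v}. block_label X u \<in> {label0, L u}" by blast
  have "block_even X v"
    using off_v block_even_remaining[OF XK alpha assms(2)] by blast
  then show "cycle X"
    using XK alpha off_v by (auto simp: cycle_def)
qed

text \<open>Counting edges shows that the graph on \<open>K\<close> with edges \<open>links_except L v\<close> is disconnected, so
  the class of a corner of \<open>v\<close> is a nontrivial cycle.\<close>

lemma fundamental_exists:
  assumes "eulerian L" "\<forall>e\<in>E. L e \<noteq> label0" "v \<in> E"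
  shows "\<exists>Z. fundamental L v Z"
proof -
  let ?R = "(link_rel (links_except L v))\<^sup>*"
  let ?X = "?R `` {(v, False, False)}"
  have X: "cycle ?X" "\<forall>u\<in>E - {v}. block_label ?X u \<in> {label0, L u}"
    using links_except_class_cycle[OF assms(2,3)] by blast+
  have "block_label ?X v \<notin> {label0, L v}"
  proof
    assume "block_label ?X v \<in> {label0, L v}"
    then have "along L ?X" using X by (auto simp: along_def)
    then have "?X = {} \<or> ?X = K"
      using eulerianD[OF assms(1)] trivial_cycle_iff[OF X(1)] by blast
    then have "?X = K" by auto
    moreover have "(v, False, False) \<in> K" using assms(3) by simp
    ultimately have "K // ?R = {K}"
      by (intro quotient_rtrancl_eq_singleton[OF sym_link_rel])
    then show False using card_classes_links_except[OF assms(3), of L] by simp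
  qed
  then have "fundamental L v ?X"
    using X by (auto simp: fundamental_def along_def)
  then show ?thesis ..
qed

subsection \<open>Strong exchange for Eulerian subgraph labels\<close>

lemma eulerian_flip_pair:
  assumes F: "eulerian (subgraph_label F)"
    and z: "along (subgraph_label (symdiff F {x})) z"
      "block_label z x \<noteq> label0" "block_label z y \<noteq> label0"
    and xy: "x \<in> E" "y \<in> E" "x \<noteq> y"
  shows "eulerian (subgraph_label (symdiff F {x, y}))"
proof -
  let ?Fx = "subgraph_label (symdiff F {x})" and ?Fxy = "subgraph_label (symdiff F {x, y})"
  have "block_label w e = label0" if w: "along ?Fxy w" and "e \<in> E" for w e
  proof -
    have wy: "block_label w y = label0"
      using along_isotropic_pair[OF z(1) w subgraph_labels_nonzero xy] z(3) xy(3)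
      by (auto simp: subgraph_label_def symdiff_def split: if_splits)
    have wFx: "along ?Fx w"
      by (rule along_agree[OF w]) (use wy in \<open>auto simp: subgraph_label_def symdiff_def\<close>)
    have wx: "block_label w x = label0"
    proof (rule ccontr)
      assume "block_label w x \<noteq> label0"
      then have wz: "block_label (symdiff w z) x = label0"
        using along_label[OF wFx xy(1)] along_label[OF z(1) xy(1)] z(2)
        by (auto simp: block_label_symdiff)
      have "along (subgraph_label F) (symdiff w z)"
        by (rule along_agree[OF along_symdiff[OF wFx z(1)]])
          (use wz in \<open>auto simp: subgraph_label_def symdiff_def\<close>)
      then have "block_label (symdiff w z) y = label0" using eulerianD[OF F] xy(2) by blast
      then show False using wy z(3) by (simp add: block_label_symdiff)
    qed
    have "along (subgraph_label F) w"
      by (rule along_agree[OF wFx]) (use wx in \<open>auto simp: subgraph_label_def symdiff_def\<close>)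
    then show ?thesis using eulerianD[OF F] \<open>e \<in> E\<close> by blast
  qed
  then show ?thesis by (simp add: eulerian_def)
qed

lemma not_eulerian_flip_witness:
  assumes "eulerian (subgraph_label F)" "\<not> eulerian (subgraph_label (symdiff F {x}))"
  shows "\<exists>z. along (subgraph_label (symdiff F {x})) z \<and> x \<in> E \<and> block_label z x \<noteq> label0"
  by (rule not_eulerian_witness[OF assms]) (auto simp: subgraph_label_def symdiff_def)

text \<open>The two flip witnesses have different labels exactly on \<open>symdiff F F'\<close>, so by isotropy they
  are both nonzero on a second edge besides \<open>x\<close>.\<close>

lemma strong_exchange_neither_flip:
  assumes F: "eulerian (subgraph_label F)" and F': "eulerian (subgraph_label F')"
    and x: "x \<in> symdiff F F'"
    and nF: "\<not> eulerian (subgraph_label (symdiff F {x}))"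
    and nF': "\<not> eulerian (subgraph_label (symdiff F' {x}))"
  shows "\<exists>y\<in>E. y \<in> symdiff F F' \<and> eulerian (subgraph_label (symdiff F {x, y})) \<and>
    eulerian (subgraph_label (symdiff F' {x, y}))"
proof -
  obtain z where z: "along (subgraph_label (symdiff F {x})) z" "x \<in> E" "block_label z x \<noteq> label0"
    using not_eulerian_flip_witness[OF F nF] by blast
  obtain g where g: "along (subgraph_label (symdiff F' {x})) g" "block_label g x \<noteq> label0"
    using not_eulerian_flip_witness[OF F' nF'] by blast
  let ?S = "{e\<in>E. subgraph_label (symdiff F {x}) e \<noteq> subgraph_label (symdiff F' {x}) e \<and>
    block_label z e \<noteq> label0 \<and> block_label g e \<noteq> label0}"
  have "even (card ?S)" by (rule along_isotropic[OF z(1) g(1) subgraph_labels_nonzero])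
  moreover have "x \<in> ?S" using x z g by (auto simp: subgraph_label_def symdiff_def)
  moreover have "finite ?S" using finite_E by simp
  ultimately have "\<exists>y\<in>?S. y \<noteq> x" by (rule even_card_has_other)
  then obtain y where y: "y \<in> ?S" "y \<noteq> x" by (elim bexE)
  then have "y \<in> symdiff F F'" by (auto simp: subgraph_label_def symdiff_def split: if_splits)
  moreover have "eulerian (subgraph_label (symdiff F {x, y}))"
    using eulerian_flip_pair[OF F z(1,3)] y z(2) by auto
  moreover have "eulerian (subgraph_label (symdiff F' {x, y}))"
    using eulerian_flip_pair[OF F' g(1,2)] y z(2) by auto
  ultimately show ?thesis using y by blast
qed

lemma fundamental_pair_isotropy:
  assumes w: "along (subgraph_label (symdiff F {x, y})) w" "block_label w y \<noteq> label0"
    and xy: "x \<in> E" "y \<in> E" "x \<noteq> y"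
    and g: "fundamental (subgraph_label F) x g" "block_label g x = third_label x"
    and h: "fundamental (subgraph_label F) y h"
  shows "block_label w x \<noteq> label0 \<longleftrightarrow> block_label g y \<noteq> label0"
    and "block_label h x \<noteq> label0 \<and> block_label w x \<noteq> label0 \<longleftrightarrow>
      block_label h y = third_label y"
proof -
  let ?A = "subgraph_label F" and ?Axy = "subgraph_label (symdiff F {x, y})"
  let ?G = "?A(x := third_label x)" and ?H = "?A(y := block_label h y)"
  have g_along: "along ?G g"
    using fundamental_along[OF g(1)] g(2) by simp
  have G: "\<forall>e\<in>E. ?G e \<noteq> label0 \<and> ?Axy e \<noteq> label0" "\<forall>e\<in>E - {x, y}. ?G e = ?Axy e"
    by (auto simp: subgraph_label_def symdiff_def)
  show "block_label w x \<noteq> label0 \<longleftrightarrow> block_label g y \<noteq> label0"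
    using along_isotropic_pair[OF g_along w(1) G(1) xy G(2)] w(2) g(2) xy(3)
    by (auto simp: subgraph_label_def third_label_def symdiff_def split: if_splits)
  have H: "\<forall>e\<in>E. ?H e \<noteq> label0 \<and> ?Axy e \<noteq> label0" "\<forall>e\<in>E - {x, y}. ?H e = ?Axy e"
    using fundamental_label[OF h] by (auto simp: subgraph_label_def symdiff_def)
  have "block_label h y = ?Axy y \<or> block_label h y = third_label y"
    using fundamental_label[OF h] subgraph_label_other[of y F "symdiff F {x, y}"]
    by (auto simp: symdiff_def)
  moreover have "?A x \<noteq> ?Axy x" by (auto simp: subgraph_label_def symdiff_def)
  ultimately show "block_label h x \<noteq> label0 \<and> block_label w x \<noteq> label0 \<longleftrightarrow>
      block_label h y = third_label y"
    using along_isotropic_pair[OF fundamental_along[OF h] w(1) H(1) xy H(2)] w(2) xy(3)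
      fundamental_label[OF h] by auto
qed

lemma eulerian_flip_pair_fundamental:
  assumes Fx: "eulerian (subgraph_label (symdiff F {x}))"
    and xy: "x \<in> E" "y \<in> E" "x \<noteq> y"
    and g: "fundamental (subgraph_label F) x g" "block_label g x = third_label x"
    and h: "fundamental (subgraph_label F) y h"
    and differ: "(block_label g y \<noteq> label0) \<noteq> (block_label h y = third_label y)"
  shows "eulerian (subgraph_label (symdiff F {x, y}))"
proof -
  let ?Ax = "subgraph_label (symdiff F {x})" and ?Axy = "subgraph_label (symdiff F {x, y})"
  have "block_label w e = label0" if w: "along ?Axy w" and "e \<in> E" for w e
  proof (cases "block_label w y = label0")
    case True
    have "along ?Ax w"
      by (rule along_agree[OF w]) (use True in \<open>auto simp: subgraph_label_def symdiff_def\<close>)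
    then show ?thesis using eulerianD[OF Fx] \<open>e \<in> E\<close> by blast
  next
    case wy: False
    note gw = fundamental_pair_isotropy(1)[OF w wy xy g h]
      and hw = fundamental_pair_isotropy(2)[OF w wy xy g h]
    have not_third: "block_label h y \<noteq> third_label y" and wx: "block_label w x \<noteq> label0"
      and hx: "block_label h x = label0"
      using gw hw differ by auto
    have "y \<in> symdiff F (symdiff F {x, y})" using xy(3) by (auto simp: symdiff_def)
    then have hyA: "block_label h y = ?Axy y"
      using subgraph_label_other fundamental_label[OF h] not_third by blast
    have "along ?Axy h"
      by (rule along_agree[OF fundamental_along[OF h]])
        (use hx hyA in \<open>auto simp: subgraph_label_def symdiff_def\<close>)
    then have wh: "along ?Axy (symdiff w h)" by (rule along_symdiff[OF w])
    have "block_label (symdiff w h) y = label0"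
      using along_label[OF w xy(2)] wy hyA by (auto simp: block_label_symdiff)
    then have "along ?Ax (symdiff w h)"
      by (intro along_agree[OF wh]) (auto simp: subgraph_label_def symdiff_def)
    then have "block_label (symdiff w h) x = label0" using eulerianD[OF Fx] xy(1) by blast
    then show ?thesis using wx hx by (simp add: block_label_symdiff)
  qed
  then show ?thesis by (simp add: eulerian_def)
qed

lemma label_count_fundamental:
  assumes "fundamental (subgraph_label F) y h" "y \<in> E"
  shows "label_count third_label h = of_bool (block_label h y = third_label y)"
proof -
  have "block_label h e \<noteq> third_label e" if "e \<in> E" "e \<noteq> y" for e
    using along_label[OF fundamental_along[OF assms(1)] that(1)] that(2) by auto
  then have "{e\<in>E. block_label h e = third_label e} =
      (if block_label h y = third_label y then {y} else {})"
    using assms(2) by auto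
  then show ?thesis by (simp add: label_count_def)
qed

lemma label_symdiff_fundamental:
  assumes e: "e \<in> E" and y: "y \<in> symdiff F F'" "y \<notin> Y" and Y: "Y \<subseteq> symdiff F F'"
    and s: "block_label s e \<in> (if e \<in> Y then {subgraph_label F e, third_label e}
                                          else {label0, subgraph_label F' e})"
    and h: "fundamental (subgraph_label F') y h"
  shows "block_label (symdiff s h) e \<in> (if e \<in> insert y Y then {subgraph_label F e, third_label e}
                                          else {label0, subgraph_label F' e})"
proof (cases "e = y")
  case True
  have "y \<in> symdiff F' F" using y(1) by (auto simp: symdiff_def)
  then have "block_label h y \<in> {subgraph_label F y, third_label y}"
    using fundamental_label[OF h] subgraph_label_other by blast
  moreover have "block_label s y \<in> {label0, subgraph_label F' y}" using s True y(2) by simp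
  ultimately have "label_add (block_label s y) (block_label h y) \<in> {subgraph_label F y, third_label y}"
    using label_add_coset[of _ "subgraph_label F' y" _ "subgraph_label F y"]
      subgraph_label_add[OF y(1)] by simp
  then show ?thesis using True by (simp add: block_label_symdiff)
next
  case False
  then have he: "block_label h e \<in> {label0, subgraph_label F' e}"
    using along_label[OF fundamental_along[OF h] e] by simp
  show ?thesis
  proof (cases "e \<in> Y")
    case True
    then have "e \<in> symdiff F F'" using Y by auto
    moreover have "block_label s e \<in> {subgraph_label F e, third_label e}" using s True by simp
    ultimately have "label_add (block_label h e) (block_label s e) \<in>
        {subgraph_label F e, third_label e}"
      using label_add_coset[of _ "subgraph_label F' e" _ "subgraph_label F e"] he
        subgraph_label_add by simp
    then show ?thesis using True by (simp add: block_label_symdiff label_add_commute)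
  next
    case False
    then have "block_label s e \<in> {label0, subgraph_label F' e}" using s by simp
    then show ?thesis
      using False he \<open>e \<noteq> y\<close> label_add_line unfolding block_label_symdiff by simp
  qed
qed

lemma fundamental_sum:
  assumes "finite Y" "Y \<subseteq> E \<inter> symdiff F F'"
    and h: "\<And>y. y \<in> Y \<Longrightarrow> fundamental (subgraph_label F') y (h y)"
  shows "\<exists>s. cycle s \<and>
    (\<forall>e\<in>E. block_label s e \<in> (if e \<in> Y then {subgraph_label F e, third_label e}
                                          else {label0, subgraph_label F' e})) \<and>
    (even (label_count third_label s) \<longleftrightarrow> even (card {y\<in>Y. block_label (h y) y = third_label y}))"
  using assms(1,2) h
proof (induction Y rule: finite_induct)
  case empty
  have "label_count third_label {} = 0" by (simp add: label_count_def block_label_def)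
  then show ?case using cycle_empty by (auto simp: block_label_def)
next
  case (insert y Y)
  then obtain s where s: "cycle s"
    "\<forall>e\<in>E. block_label s e \<in> (if e \<in> Y then {subgraph_label F e, third_label e}
                                          else {label0, subgraph_label F' e})"
    "even (label_count third_label s) \<longleftrightarrow> even (card {y\<in>Y. block_label (h y) y = third_label y})"
    by auto
  have y: "y \<in> E" "y \<in> symdiff F F'" "y \<notin> Y" and Y: "Y \<subseteq> symdiff F F'" using insert by auto
  have hy: "fundamental (subgraph_label F') y (h y)" using insert.prems by simp
  let ?s = "symdiff s (h y)"
  have "card {y'\<in>insert y Y. block_label (h y') y' = third_label y'} =
      of_bool (block_label (h y) y = third_label y) + card {y'\<in>Y. block_label (h y') y' = third_label y'}"
    using insert.hyps(1,2) by (rule card_Collect_insert)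
  moreover have "even (label_count third_label ?s) \<longleftrightarrow>
      (even (label_count third_label s) \<longleftrightarrow> even (label_count third_label (h y)))"
    using label_count_symdiff[OF s(1) fundamental_along[OF hy, THEN along_cycle]] by simp
  ultimately have "even (label_count third_label ?s) \<longleftrightarrow>
      even (card {y'\<in>insert y Y. block_label (h y') y' = third_label y'})"
    using label_count_fundamental[OF hy y(1)] s(3) by simp
  moreover have "cycle ?s" using cycle_symdiff[OF s(1) fundamental_along[OF hy, THEN along_cycle]] .
  ultimately show ?case
    using label_symdiff_fundamental[OF _ y(2,3) Y _ hy] s(2) by blast
qed

lemma flip_cycle_labels:
  assumes z: "along (subgraph_label (symdiff F {x})) z" and x: "x \<in> symdiff F F'"
    and Y: "Y = {y\<in>E. y \<in> symdiff F F' \<and> y \<noteq> x \<and> block_label z y \<noteq> label0}"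
    and e: "e \<in> E"
  shows "block_label z e \<in> (if e \<in> Y then {subgraph_label F e} else {label0, subgraph_label F' e})"
proof (cases "e \<in> Y")
  case True
  then show ?thesis using along_label[OF z e] by (auto simp: Y subgraph_label_def symdiff_def)
next
  case False
  then show ?thesis
    using along_label[OF z e] x e by (cases "e = x") (auto simp: Y subgraph_label_def symdiff_def)
qed

text \<open>The sum of the fundamental cycles at \<open>Y\<close> differs from \<open>z\<close> by a cycle along \<open>F'\<close>,
  which is trivial since \<open>F'\<close> is Eulerian; and \<open>z\<close> never carries the third label.\<close>

lemma even_card_third_fundamentals:
  assumes F': "eulerian (subgraph_label F')"
    and z: "along (subgraph_label (symdiff F {x})) z" and x: "x \<in> symdiff F F'"
    and Y: "Y = {y\<in>E. y \<in> symdiff F F' \<and> y \<noteq> x \<and> block_label z y \<noteq> label0}"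
    and h: "\<And>y. y \<in> Y \<Longrightarrow> fundamental (subgraph_label F') y (h y)"
  shows "even (card {y\<in>Y. block_label (h y) y = third_label y})"
proof -
  obtain s where s: "cycle s"
    "\<forall>e\<in>E. block_label s e \<in> (if e \<in> Y then {subgraph_label F e, third_label e}
                                          else {label0, subgraph_label F' e})"
    "even (label_count third_label s) \<longleftrightarrow> even (card {y\<in>Y. block_label (h y) y = third_label y})"
    using fundamental_sum[of Y F F' h] finite_E h by (auto simp: Y)
  note z_label = flip_cycle_labels[OF z x Y]
  have "along (subgraph_label F') (symdiff z s)"
  proof (rule alongI)
    show "cycle (symdiff z s)" using z s(1) by (simp add: along_cycle cycle_symdiff)
    show "block_label (symdiff z s) e \<in> {label0, subgraph_label F' e}" if "e \<in> E" for e
    proof (cases "e \<in> Y")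
      case True
      then have "e \<in> symdiff F F'" by (simp add: Y)
      moreover have "block_label z e = subgraph_label F e"
        "block_label s e \<in> {subgraph_label F e, third_label e}"
        using z_label[OF that] s(2) that True by auto
      ultimately show ?thesis
        using subgraph_label_add_third by (auto simp: block_label_symdiff)
    next
      case False
      then have "block_label z e \<in> {label0, subgraph_label F' e}"
        "block_label s e \<in> {label0, subgraph_label F' e}"
        using z_label[OF that] s(2) that by auto
      then show ?thesis unfolding block_label_symdiff by (rule label_add_line)
    qed
  qed
  then have "block_label s e = block_label z e" if "e \<in> E" for e
  proof -
    have "block_label (symdiff z s) e = label0"
      by (rule eulerianD[OF F' \<open>along _ (symdiff z s)\<close> that])
    then show ?thesis unfolding block_label_symdiff by simp
  qed
  moreover have "block_label z e \<noteq> third_label e" if "e \<in> E" for e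
    using along_label[OF z that] by auto
  ultimately have no_third: "{e\<in>E. block_label s e = third_label e} = {}" by auto
  have "label_count third_label s = 0"
    unfolding label_count_def no_third by simp
  then show ?thesis using s(3) by simp
qed

lemma fundamental_third_label:
  assumes Fx: "eulerian (subgraph_label (symdiff F {x}))"
    and g: "fundamental (subgraph_label F) x g" and x: "x \<in> E"
  shows "block_label g x = third_label x"
proof (rule ccontr)
  assume "block_label g x \<noteq> third_label x"
  moreover have "x \<in> symdiff F (symdiff F {x})" by (simp add: symdiff_def)
  ultimately have gx: "block_label g x = subgraph_label (symdiff F {x}) x"
    using subgraph_label_other fundamental_label[OF g] by blast
  have "along (subgraph_label (symdiff F {x})) g"
  proof (rule alongI[OF along_cycle[OF fundamental_along[OF g]]])
    fix e assume "e \<in> E"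
    then show "block_label g e \<in> {label0, subgraph_label (symdiff F {x}) e}"
      using along_label[OF fundamental_along[OF g] \<open>e \<in> E\<close>] gx
      by (cases "e = x") (auto simp: subgraph_label_def symdiff_def)
  qed
  then show False
    using eulerianD[OF Fx _ x] fundamental_label[OF g] by simp
qed

lemma odd_card_fundamental_support:
  assumes z: "along (subgraph_label (symdiff F {x})) z" "block_label z x \<noteq> label0"
    and x: "x \<in> E" "x \<in> symdiff F F'"
    and Y: "Y = {y\<in>E. y \<in> symdiff F F' \<and> y \<noteq> x \<and> block_label z y \<noteq> label0}"
    and g: "fundamental (subgraph_label F') x g" "block_label g x = third_label x"
  shows "odd (card {y\<in>Y. block_label g y \<noteq> label0})"
proof -
  let ?P = "(subgraph_label F')(x := third_label x)"
  let ?S = "{e\<in>E. subgraph_label (symdiff F {x}) e \<noteq> ?P e \<and>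
    block_label z e \<noteq> label0 \<and> block_label g e \<noteq> label0}"
  have "?S = insert x {y\<in>Y. block_label g y \<noteq> label0}"
    using x z(2) g(2) by (auto simp: Y subgraph_label_def third_label_def symdiff_def)
  moreover have "even (card ?S)"
    using along_isotropic[OF z(1) fundamental_along[OF g(1)]] g(2) by simp
  moreover have "finite {y\<in>Y. block_label g y \<noteq> label0}" by (simp add: Y finite_E)
  moreover have "x \<notin> Y" by (simp add: Y)
  ultimately show ?thesis by simp
qed

text \<open>Here \<open>y\<close> is found in \<open>Y\<close> by comparing an odd count (where the fundamental cycle at \<open>x\<close> is
  nonzero) with an even one (where the fundamental cycle at \<open>y\<close> carries the third label).\<close>

lemma strong_exchange_one_flip:
  assumes F: "eulerian (subgraph_label F)" and F': "eulerian (subgraph_label F')"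
    and x: "x \<in> symdiff F F'"
    and nF: "\<not> eulerian (subgraph_label (symdiff F {x}))"
    and F'x: "eulerian (subgraph_label (symdiff F' {x}))"
  shows "\<exists>y\<in>E. y \<in> symdiff F F' \<and> eulerian (subgraph_label (symdiff F {x, y})) \<and>
    eulerian (subgraph_label (symdiff F' {x, y}))"
proof -
  obtain z where z: "along (subgraph_label (symdiff F {x})) z" "x \<in> E" "block_label z x \<noteq> label0"
    using not_eulerian_flip_witness[OF F nF] by blast
  define Y where "Y = {y\<in>E. y \<in> symdiff F F' \<and> y \<noteq> x \<and> block_label z y \<noteq> label0}"
  obtain g where g: "fundamental (subgraph_label F') x g"
    using fundamental_exists[OF F' _ z(2)] by auto
  have gx: "block_label g x = third_label x"
    by (rule fundamental_third_label[OF F'x g z(2)])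
  obtain h where h: "\<And>y. y \<in> Y \<Longrightarrow> fundamental (subgraph_label F') y (h y)"
    using fundamental_exists[OF F'] by (metis (no_types, lifting) Y_def mem_Collect_eq subgraph_label_nonzero)
  have "\<exists>y\<in>Y. (block_label g y \<noteq> label0) \<noteq> (block_label (h y) y = third_label y)"
  proof (rule ccontr)
    assume "\<not> ?thesis"
    then have "{y\<in>Y. block_label g y \<noteq> label0} = {y\<in>Y. block_label (h y) y = third_label y}"
      by auto
    then show False
      using odd_card_fundamental_support[OF z(1,3,2) x Y_def g gx]
        even_card_third_fundamentals[OF F' z(1) x Y_def h] by simp
  qed
  then obtain y where y: "y \<in> Y"
    "(block_label g y \<noteq> label0) \<noteq> (block_label (h y) y = third_label y)"
    by (elim bexE)
  then have "eulerian (subgraph_label (symdiff F {x, y}))"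
    using eulerian_flip_pair[OF F z(1,3)] z(2) by (auto simp: Y_def)
  moreover have "eulerian (subgraph_label (symdiff F' {x, y}))"
    using eulerian_flip_pair_fundamental[OF F'x z(2) _ _ g gx h[OF y(1)] y(2)] y(1)
    by (auto simp: Y_def)
  ultimately show ?thesis using y(1) by (auto simp: Y_def)
qed

lemma eulerian_strong_exchange:
  assumes F: "eulerian (subgraph_label F)" and F': "eulerian (subgraph_label F')"
    and x: "x \<in> E" "x \<in> symdiff F F'"
  shows "\<exists>y\<in>E. y \<in> symdiff F F' \<and> eulerian (subgraph_label (symdiff F {x, y})) \<and>
    eulerian (subgraph_label (symdiff F' {x, y}))"
proof (cases "eulerian (subgraph_label (symdiff F {x}))"; cases "eulerian (subgraph_label (symdiff F' {x}))")
  assume "eulerian (subgraph_label (symdiff F {x}))" "eulerian (subgraph_label (symdiff F' {x}))"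
  then show ?thesis using x by (intro bexI[of _ x]) auto
next
  assume "eulerian (subgraph_label (symdiff F {x}))" "\<not> eulerian (subgraph_label (symdiff F' {x}))"
  moreover have "x \<in> symdiff F' F" using x by (auto simp: symdiff_def)
  ultimately show ?thesis
    using strong_exchange_one_flip[OF F' F] by (metis symdiff_commute)
next
  assume "\<not> eulerian (subgraph_label (symdiff F {x}))" "eulerian (subgraph_label (symdiff F' {x}))"
  then show ?thesis using strong_exchange_one_flip[OF F F' x(2)] by blast
next
  assume "\<not> eulerian (subgraph_label (symdiff F {x}))" "\<not> eulerian (subgraph_label (symdiff F' {x}))"
  then show ?thesis using strong_exchange_neither_flip[OF F F' x(2)] by blast
qed

end

section \<open>Ribbon graphs\<close>

lemma sym_adj_rel: "sym (adj_rel G)"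
proof (rule symI)
  fix a b assume "(a, b) \<in> adj_rel G"
  then obtain e i where "e \<in> redges G" "a = rinc G e i" "b = rinc G e (\<not> i)"
    by (auto simp: adj_rel_def)
  moreover have "rinc G e i = rinc G e (\<not> \<not> i)" by simp
  ultimately show "(b, a) \<in> adj_rel G" unfolding adj_rel_def by blast
qed

lemma component_eq_class:
  assumes "C \<in> components G" "u \<in> C"
  shows "C = (adj_rel G)\<^sup>* `` {u}"
proof -
  obtain v where Cv: "C = (adj_rel G)\<^sup>* `` {v}"
    using assms(1) by (auto simp: components_def elim: quotientE)
  then have "(v, u) \<in> (adj_rel G)\<^sup>*" using assms(2) by simp
  then show ?thesis
    using Cv equiv_class_eq[OF equiv_rtrancl[OF sym_adj_rel]] by metis
qed

lemma rinc_in_component: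
  assumes "C \<in> components G" "e \<in> edges_at G C"
  shows "rinc G e i \<in> C"
proof -
  obtain j where j: "rinc G e j \<in> C" "e \<in> redges G" using assms(2) by (auto simp: edges_at_def)
  have "(rinc G e j, rinc G e i) \<in> (adj_rel G)\<^sup>*"
    using j(2) by (cases "i = j") (auto simp: adj_rel_def)
  then show ?thesis using component_eq_class[OF assms(1) j(1)] by auto
qed

lemma edges_at_disjoint:
  assumes "C1 \<in> components G" "C2 \<in> components G" "e \<in> edges_at G C1" "e \<in> edges_at G C2"
  shows "C1 = C2"
  using component_eq_class[OF assms(1) rinc_in_component[OF assms(1,3)]]
    component_eq_class[OF assms(2) rinc_in_component[OF assms(2,4)]] by simp

lemma cvert_in_component:
  assumes "C \<in> components G" "fst c \<in> edges_at G C"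
  shows "cvert G c \<in> C"
  using rinc_in_component[OF assms] by (cases c) (simp add: cvert_def)

lemma edges_at_if_cvert_in:
  assumes "fst d \<in> redges G" "cvert G d \<in> C"
  shows "fst d \<in> edges_at G C"
  using assms by (cases d; cases "fst (snd d)") (auto simp: cvert_def edges_at_def)

lemma closed_corners_same_vertex:
  assumes G: "ribbon_graph G"
    and X: "X \<subseteq> corners_of (redges G)" "\<forall>c\<in>X. ralpha G c \<in> X" "\<forall>c\<in>X. corners_of {fst c} \<subseteq> X"
    and c: "c \<in> X" and d: "fst d \<in> redges G" "cvert G d = cvert G c"
  shows "d \<in> X"
proof -
  have "fst c \<in> redges G" using c X(1) by (meson mem_corners_of subsetD)
  then have "(c, d) \<in> (vertex_circle_rel G)\<^sup>*"
    using G d unfolding ribbon_graph_def by (metis mem_corners_of)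
  then show ?thesis
  proof (induction rule: rtrancl_induct)
    case (step b d)
    have "d = ralpha G b \<or> fst d = fst b"
      using step.hyps(2) by (cases b) (auto simp: vertex_circle_rel_def cbeta_def)
    then show ?case
      using X(2,3) step.IH by (metis mem_corners_of singletonI subsetD)
  qed (rule c)
qed

lemma closed_corners_reach_component:
  assumes G: "ribbon_graph G" and C: "C \<in> components G"
    and X: "X \<subseteq> corners_of (edges_at G C)" "\<forall>c\<in>X. ralpha G c \<in> X" "\<forall>c\<in>X. corners_of {fst c} \<subseteq> X"
    and c0: "c0 \<in> X" and u: "u \<in> C"
  shows "\<exists>c\<in>X. cvert G c = u"
proof -
  have X_sub: "X \<subseteq> corners_of (redges G)" using X(1) by (auto simp: edges_at_def)
  have "fst c0 \<in> edges_at G C" using c0 X(1) by (meson mem_corners_of subsetD)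
  then have "(cvert G c0, u) \<in> (adj_rel G)\<^sup>*"
    using component_eq_class[OF C cvert_in_component[OF C]] u by blast
  then show ?thesis
  proof (induction rule: rtrancl_induct)
    case (step w w')
    then obtain c e i where c: "c \<in> X" "cvert G c = w" and e: "e \<in> redges G"
      "w = rinc G e i" "w' = rinc G e (\<not> i)"
      by (auto simp: adj_rel_def)
    have "(e, i, False) \<in> X"
      using closed_corners_same_vertex[OF G X_sub X(2,3) c(1), of "(e, i, False)"] c e
      by (simp add: cvert_def)
    then have "(e, \<not> i, False) \<in> X" using X(3) by fastforce
    then show ?case using e by (intro bexI[of _ "(e, \<not> i, False)"]) (auto simp: cvert_def)
  qed (use c0 in blast)
qed

lemma corner_system_component:
  assumes G: "ribbon_graph G" and C: "C \<in> components G" and ne: "edges_at G C \<noteq> {}"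
  shows "corner_system (edges_at G C) (ralpha G)"
proof
  let ?E = "edges_at G C"
  have E_sub: "?E \<subseteq> redges G" by (auto simp: edges_at_def)
  have alpha: "fst (ralpha G c) \<in> redges G" "ralpha G (ralpha G c) = c" "ralpha G c \<noteq> c"
    "cvert G (ralpha G c) = cvert G c" if "c \<in> corners_of ?E" for c
    using G that E_sub by (auto simp: ribbon_graph_def)
  show "finite ?E" using G finite_subset[OF E_sub] by (simp add: ribbon_graph_def)
  show "?E \<noteq> {}" by (rule ne)
  show "ralpha G c \<in> corners_of ?E" if "c \<in> corners_of ?E" for c
    using alpha[OF that] edges_at_if_cvert_in[of "ralpha G c" G C] cvert_in_component[OF C, of c] that
    by simp
  show "ralpha G (ralpha G c) = c" "ralpha G c \<noteq> c" if "c \<in> corners_of ?E" for c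
    using alpha[OF that] by auto
  show "X = corners_of ?E"
    if X: "X \<subseteq> corners_of ?E" "X \<noteq> {}" "\<forall>c\<in>X. ralpha G c \<in> X" "\<forall>c\<in>X. corners_of {fst c} \<subseteq> X"
    for X
  proof -
    obtain c0 where c0: "c0 \<in> X" using X(2) by blast
    have XR: "X \<subseteq> corners_of (redges G)" using X(1) E_sub by (auto simp: subset_iff)
    have "d \<in> X" if d: "fst d \<in> ?E" for d
    proof -
      obtain c where c: "c \<in> X" "cvert G c = cvert G d"
        using closed_corners_reach_component[OF G C X(1,3,4) c0 cvert_in_component[OF C d]] by blast
      have "fst d \<in> redges G" using d E_sub by blast
      then show ?thesis using closed_corners_same_vertex[OF G XR X(3,4) c(1)] c(2) by simp
    qed
    then show ?thesis using X(1) by auto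
  qed
qed

lemma isolated_in_empty:
  assumes C: "C \<in> components G" and ne: "edges_at G C \<noteq> {}"
  shows "isolated_in G C = {}"
proof (rule ccontr)
  assume "isolated_in G C \<noteq> {}"
  then obtain v where v: "v \<in> C" "\<forall>e\<in>redges G. \<forall>i. rinc G e i \<noteq> v"
    by (auto simp: isolated_in_def)
  obtain e where e: "e \<in> edges_at G C" using ne by auto
  have "(v, rinc G e False) \<in> (adj_rel G)\<^sup>*"
    using component_eq_class[OF C v(1)] rinc_in_component[OF C e] by auto
  then have "rinc G e False = v" using v(2) by (cases rule: converse_rtranclE) (auto simp: adj_rel_def)
  then show False using v(2) e by (auto simp: edges_at_def)
qed

lemma num_boundary_components_eq_1_iff:
  assumes G: "ribbon_graph G" and C: "C \<in> components G" and ne: "edges_at G C \<noteq> {}"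
  shows "num_boundary_components G C F = 1 \<longleftrightarrow>
    corner_system.eulerian (edges_at G C) (ralpha G) (corner_system.subgraph_label (rtwist G) F)"
proof -
  let ?E = "edges_at G C"
  interpret corner_system ?E "ralpha G" "rtwist G"
    by (rule corner_system_component[OF G C ne])
  have step: "(c, d) \<in> bstep G (F \<inter> ?E) \<longleftrightarrow> d = ralpha G c \<or> d = matched (subgraph_label F) c"
    if "fst c \<in> ?E" for c d
    using that by (cases c) (auto simp: bstep_def matched_def subgraph_label_def ceps_def cbeta_def)
  have "boundary_rel G C (F \<inter> ?E) = boundary_adj F"
    using step by (auto simp: boundary_rel_def boundary_adj_def) (metis matched_simps(2))+
  then show ?thesis
    using eulerian_iff_boundary_connected isolated_in_empty[OF C ne]
    by (simp add: num_boundary_components_def)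
qed

lemma num_boundary_components_no_edges:
  assumes C: "C \<in> components G" and no_edges: "edges_at G C = {}"
  shows "num_boundary_components G C F = 1"
proof -
  obtain v where v: "v \<in> C" using C by (auto simp: components_def elim!: quotientE)
  have isolated: "\<forall>e\<in>redges G. \<forall>i. rinc G e i \<notin> C"
    using no_edges by (auto simp: edges_at_def) (metis (full_types))
  have "C = {v}"
  proof
    show "C \<subseteq> {v}"
    proof
      fix u assume "u \<in> C"
      then have "(v, u) \<in> (adj_rel G)\<^sup>*" using component_eq_class[OF C v] by auto
      then show "u \<in> {v}" using isolated v by (cases rule: converse_rtranclE) (auto simp: adj_rel_def)
    qed
  qed (use v in simp)
  moreover have "isolated_in G C = C" using isolated by (auto simp: isolated_in_def)
  ultimately show ?thesis
    using no_edges by (simp add: num_boundary_components_def corners_of_def)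
qed

lemma num_boundary_components_cong:
  "F \<inter> edges_at G C = F' \<inter> edges_at G C \<Longrightarrow>
    num_boundary_components G C F = num_boundary_components G C F'"
  by (simp add: num_boundary_components_def)

lemma quasi_trees_symdiff:
  assumes B: "B \<in> quasi_trees G" and C0: "C0 \<in> components G" and S: "S \<subseteq> edges_at G C0"
    and one: "num_boundary_components G C0 (symdiff B S) = 1"
  shows "symdiff B S \<in> quasi_trees G"
  unfolding quasi_trees_def
proof (intro CollectI conjI ballI)
  show "symdiff B S \<subseteq> redges G"
    using B S by (auto simp: quasi_trees_def symdiff_def edges_at_def)
  fix C assume C: "C \<in> components G"
  show "num_boundary_components G C (symdiff B S) = 1"
  proof (cases "C = C0")
    case False
    then have "S \<inter> edges_at G C = {}" using edges_at_disjoint[OF C C0] S by auto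
    then have "num_boundary_components G C (symdiff B S) = num_boundary_components G C B"
      by (intro num_boundary_components_cong) (auto simp: symdiff_def)
    then show ?thesis using B C by (simp add: quasi_trees_def)
  qed (use one in simp)
qed

lemma quasi_trees_nonempty:
  assumes G: "ribbon_graph G"
  shows "quasi_trees G \<noteq> {}"
proof -
  have "\<exists>F\<subseteq>edges_at G C. num_boundary_components G C F = 1" if C: "C \<in> components G" for C
  proof (cases "edges_at G C = {}")
    case True
    then show ?thesis using num_boundary_components_no_edges[OF C] by blast
  next
    case False
    interpret corner_system "edges_at G C" "ralpha G" "rtwist G"
      by (rule corner_system_component[OF G C False])
    show ?thesis
      using eulerian_subgraph_label_exists num_boundary_components_eq_1_iff[OF G C False] by blast
  qed
  then obtain f where f: "\<And>C. C \<in> components G \<Longrightarrow>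
      f C \<subseteq> edges_at G C \<and> num_boundary_components G C (f C) = 1"
    by metis
  have "\<Union> (f ` components G) \<in> quasi_trees G"
    unfolding quasi_trees_def
  proof (intro CollectI conjI ballI)
    show "\<Union> (f ` components G) \<subseteq> redges G" using f by (fastforce simp: edges_at_def)
    fix C assume C: "C \<in> components G"
    have "\<Union> (f ` components G) \<inter> edges_at G C = f C \<inter> edges_at G C"
      using f edges_at_disjoint[OF _ C] C by blast
    then show "num_boundary_components G C (\<Union> (f ` components G)) = 1"
      using num_boundary_components_cong f[OF C] by metis
  qed
  then show ?thesis by blast
qed

lemma quasi_trees_strong_exchange:
  assumes G: "ribbon_graph G" and B: "B \<in> quasi_trees G" and B': "B' \<in> quasi_trees G"
    and x: "x \<in> symdiff B B'"
  shows "\<exists>y\<in>symdiff B B'. symdiff B {x, y} \<in> quasi_trees G \<and> symdiff B' {x, y} \<in> quasi_trees G"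
proof -
  have "x \<in> redges G" using x B B' by (auto simp: quasi_trees_def symdiff_def)
  then have "rinc G x False \<in> rverts G" using G by (simp add: ribbon_graph_def)
  define C where "C = (adj_rel G)\<^sup>* `` {rinc G x False}"
  have C: "C \<in> components G"
    unfolding C_def components_def by (rule quotientI) fact
  have xC: "x \<in> edges_at G C" using \<open>x \<in> redges G\<close> by (auto simp: edges_at_def C_def)
  then have ne: "edges_at G C \<noteq> {}" by auto
  interpret corner_system "edges_at G C" "ralpha G" "rtwist G"
    by (rule corner_system_component[OF G C ne])
  have "eulerian (subgraph_label B)" "eulerian (subgraph_label B')"
    using B B' C num_boundary_components_eq_1_iff[OF G C ne] by (auto simp: quasi_trees_def)
  then obtain y where y: "y \<in> edges_at G C" "y \<in> symdiff B B'"
    "eulerian (subgraph_label (symdiff B {x, y}))" "eulerian (subgraph_label (symdiff B' {x, y}))"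
    using eulerian_strong_exchange xC x by blast
  have "{x, y} \<subseteq> edges_at G C" using xC y(1) by simp
  then show ?thesis
    using y quasi_trees_symdiff[OF B C] quasi_trees_symdiff[OF B' C]
      num_boundary_components_eq_1_iff[OF G C ne] by blast
qed

theorem corollary2p33:
  fixes G :: "('v, 'e) ribbon_graph"
  assumes "ribbon_graph G"
  shows "strong_delta_matroid (redges G) (quasi_trees G)"
proof -
  have "finite (redges G)" using assms by (simp add: ribbon_graph_def)
  moreover have "\<forall>B\<in>quasi_trees G. B \<subseteq> redges G" by (simp add: quasi_trees_def)
  moreover have "\<forall>B\<in>quasi_trees G. \<forall>B'\<in>quasi_trees G. \<forall>x\<in>symdiff B B'.
      \<exists>y\<in>symdiff B B'. symdiff B {x, y} \<in> quasi_trees G \<and> symdiff B' {x, y} \<in> quasi_trees G"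
    using quasi_trees_strong_exchange[OF assms] by blast
  ultimately show ?thesis
    using quasi_trees_nonempty[OF assms]
    unfolding strong_delta_matroid_def delta_matroid_def by blast
qed

end
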